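(* Let $p,q$ be integers with $1+|p|<|q|$. Then $\mathrm{Dom}_{p,q}$ is a regular language, and $\psi_{p,q}:\mathrm{Dom}_{p,q}\to\mathbb{Z}^2$ is an FA-presentation of $(\mathbb{Z}^2,+)$, i.e. the relation $\{(u,v,w)\in\mathrm{Dom}_{p,q}^3:\psi_{p,q}(u)+\psi_{p,q}(v)=\psi_{p,q}(w)\}$ is FA-recognizable. Moreover, if $\gcd(p,q)=1$, then neither of the languages $\psi_{p,q}^{-1}(\langle\xi\rangle)$, $\psi_{p,q}^{-1}(\langle\eta\rangle)$ is regular, and neither of the relations $\{(u,v):\psi_{p,q}(v)=\pi_\xi(\psi_{p,q}(u))\}$, $\{(u,v):\psi_{p,q}(v)=\pi_\eta(\psi_{p,q}(u))\}$ is FA-recognizable, where $\pi_\xi,\pi_\eta:\mathbb{Z}^2\to\mathbb{Z}^2$ are the projections $[sx+r]_\sim\mapsto[r]_\sim$ and $[sx+r]_\sim\mapsto[sx]_\sim$ onto the components of $\mathbb{Z}^2=\langle\eta\rangle\oplus\langle\xi\rangle$.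
   Context: Let $p,q$ be integers with $1+|p|<|q|$ and $t(x)=x^2+px-q$. For $f,g\in\mathbb{Z}[x]$ write $f\sim g$ if $t$ divides $f-g$; identify $\mathbb{Z}^2$ with the additive group of $\mathbb{Z}[x]/\langle t\rangle$ via $(h_1,h_2)\mapsto[h_1x+h_2]_\sim$, and put $\eta=[x]_\sim$, $\xi=[1]_\sim$. A polynomial $\sum a_ix^i$ is reduced if $|a_i|<|q|$ for all $i$. Let $\Sigma_q=\{-(|q|-1),\dots,|q|-1\}$ with the order $-(|q|-1)<\dots<|q|-1$; a string $a_0a_1\dots a_n\in\Sigma_q^*$ represents the reduced polynomial $a_nx^n+\dots+a_1x+a_0$, and two strings are equivalent if their polynomials are $\sim$-equivalent. $\mathrm{Dom}_{p,q}$ is the set of $w\in\Sigma_q^*$ such that no string $u$ strictly smaller than $w$ in the length-lexicographic order on $\Sigma_q^*$ is equivalent to $w$, and $\psi_{p,q}:\mathrm{Dom}_{p,q}\to\mathbb{Z}^2$ sends $w$ to the $\sim$-class of the polynomial it represents. For strings $w_1,\dots,w_m$ over an alphabet $\Sigma$, their convolution $w_1\otimes\dots\otimes w_m$ is the string over $(\Sigma\cup\{\diamond\})^m$ of length $\max|w_i|$ whose $k$-th letter is the column $(\sigma_1,\dots,\sigma_m)$, $\sigma_i$ being the $k$-th letter of $w_i$ if $k\le|w_i|$ and the padding symbol $\diamond$ otherwise. A relation $R\subseteq(\Sigma^* )^m$ is FA-recognizable if $\{w_1\otimes\dots\otimes w_m:(w_1,\dots,w_m)\in R\}$ is accepted by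 a finite automaton; a function is FA-recognizable if its graph is. *)

theory Defs
  imports "HOL-Computational_Algebra.Polynomial"
begin

definition fa_recognizable :: "'a set \<Rightarrow> 'a list set \<Rightarrow> bool" where
  "fa_recognizable A L \<longleftrightarrow> finite A \<and> L \<subseteq> lists A \<and>
     (\<exists>(Q::nat set) s \<delta> F. finite Q \<and> s \<in> Q \<and> (\<forall>st\<in>Q. \<forall>a\<in>A. \<delta> st a \<in> Q) \<and> F \<subseteq> Q \<and>
        (\<forall>w\<in>lists A. w \<in> L \<longleftrightarrow> fold (\<lambda>a st. \<delta> st a) w s \<in> F))"

definition convolution :: "'a list list \<Rightarrow> 'a option list list" where
  "convolution ws = map (\<lambda>k. map (\<lambda>w. if k < length w then Some (w ! k) else None) ws)
                        [0..<foldr (\<lambda>w m. max (length w) m) ws 0]"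

definition conv_alphabet :: "'a set \<Rightarrow> nat \<Rightarrow> 'a option list set" where
  "conv_alphabet A m = {c. length c = m \<and> set c \<subseteq> insert None (Some ` A)}"

definition fa_rel_recognizable :: "'a set \<Rightarrow> nat \<Rightarrow> 'a list list set \<Rightarrow> bool" where
  "fa_rel_recognizable A m R \<longleftrightarrow> fa_recognizable (conv_alphabet A m) (convolution ` R)"

definition tpoly :: "int \<Rightarrow> int \<Rightarrow> int poly" where
  "tpoly p q = [:-q, p, 1:]"

definition sim :: "int \<Rightarrow> int \<Rightarrow> int poly \<Rightarrow> int poly \<Rightarrow> bool" where
  "sim p q f g \<longleftrightarrow> tpoly p q dvd (f - g)"

definition Sigma_q :: "int \<Rightarrow> int set" where
  "Sigma_q q = {-(\<bar>q\<bar> - 1) .. \<bar>q\<bar> - 1}"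

text \<open>The string a0 a1 ... an represents a_n x^n + ... + a_0 (Poly takes coefficients low first).\<close>
definition str_equiv :: "int \<Rightarrow> int \<Rightarrow> int list \<Rightarrow> int list \<Rightarrow> bool" where
  "str_equiv p q u w \<longleftrightarrow> sim p q (Poly u) (Poly w)"

definition llex_less :: "int list \<Rightarrow> int list \<Rightarrow> bool" where
  "llex_less u w \<longleftrightarrow> (u, w) \<in> lenlex {(a, b). a < b}"

definition Dom :: "int \<Rightarrow> int \<Rightarrow> int list set" where
  "Dom p q = {w \<in> lists (Sigma_q q). \<not> (\<exists>u \<in> lists (Sigma_q q). llex_less u w \<and> str_equiv p q u w)}"

text \<open>Z^2 identified with Z[x]/<t> via (h1,h2) \<mapsto> [h1 x + h2].\<close>
definition psi :: "int \<Rightarrow> int \<Rightarrow> int list \<Rightarrow> int \<times> int" where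
  "psi p q w = (THE h. sim p q [:snd h, fst h:] (Poly w))"

definition addZ2 :: "int \<times> int \<Rightarrow> int \<times> int \<Rightarrow> int \<times> int" where
  "addZ2 a b = (fst a + fst b, snd a + snd b)"

definition eta :: "int \<times> int" where "eta = (1, 0)"
definition xi :: "int \<times> int" where "xi = (0, 1)"

definition cyc :: "int \<times> int \<Rightarrow> (int \<times> int) set" where
  "cyc g = {(n * fst g, n * snd g) | n. True}"

definition pi_xi :: "int \<times> int \<Rightarrow> int \<times> int" where "pi_xi h = (0, snd h)"
definition pi_eta :: "int \<times> int \<Rightarrow> int \<times> int" where "pi_eta h = (fst h, 0)"

end

theory Submission
  imports Defs "HOL-Library.Product_Plus"
begin

text \<open>
  Writing h1 x + h2 as (h1, h2), multiplication by x is a linear map on pairs and the string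
  a0 a1 ... an has the value a0 + x (a1 + x (... + x an)). Every class has a representing string:
  split off the digit a0 \<equiv> h2 (mod q); the norm 3|h1| + 2|h2| then drops because
  1 + |p| < |q|. So the shortlex-least representatives form Dom and psi is a bijection.

  Comparing strings digit by digit, the part of the value difference not yet cancelled (the
  carry) is forced at every step and stays in a finite box. Hence a finite automaton keeping the
  carry in its state checks equality and addition of values, and Dom is the complement of an
  automaton that guesses a shortlex-smaller equivalent string.

  Conversely, pumping an infinite regular set of representatives produces a nonzero difference G
  of values together with x^l G (l \<ge> 1), both in the same subgroup. If gcd p q = 1, the
  coefficient of x in x^l is prime to q, hence nonzero, which rules this out for the subgroups
  generated by xi and by eta. The graph relations of the projections restrict on the diagonal
  to these preimages.
\<close>

section \<open>Finite automata\<close>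

lemma fa_recognizable_dfa:
  fixes \<delta> :: "'s \<Rightarrow> 'a \<Rightarrow> 's"
  assumes A: "finite A" and L: "L \<subseteq> lists A" and Q: "finite Q" and s: "s \<in> Q"
    and closed: "\<forall>st\<in>Q. \<forall>a\<in>A. \<delta> st a \<in> Q"
    and accept: "\<forall>w\<in>lists A. w \<in> L \<longleftrightarrow> fold (\<lambda>a st. \<delta> st a) w s \<in> F"
  shows "fa_recognizable A L"
proof -
  obtain h :: "'s \<Rightarrow> nat" where h: "inj_on h Q"
    using Q finite_imp_inj_to_nat_seg by blast
  define \<delta>' where "\<delta>' n a = h (\<delta> (inv_into Q h n) a)" for n a
  have run: "fold (\<lambda>a st. \<delta>' st a) w (h st) = h (fold (\<lambda>a st. \<delta> st a) w st)
      \<and> fold (\<lambda>a st. \<delta> st a) w st \<in> Q" if "w \<in> lists A" "st \<in> Q" for w st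
    using that
  proof (induction w arbitrary: st)
    case (Cons a w)
    then have "\<delta>' (h st) a = h (\<delta> st a)" "\<delta> st a \<in> Q"
      using h closed by (auto simp: \<delta>'_def)
    with Cons show ?case by simp
  qed simp
  have "\<forall>st\<in>h ` Q. \<forall>a\<in>A. \<delta>' st a \<in> h ` Q"
    using closed h by (auto simp: \<delta>'_def)
  moreover have "\<forall>w\<in>lists A. w \<in> L \<longleftrightarrow> fold (\<lambda>a st. \<delta>' st a) w (h s) \<in> h ` (F \<inter> Q)"
    using run[OF _ s] accept h by (auto simp: inj_on_image_mem_iff)
  ultimately show ?thesis
    unfolding fa_recognizable_def using A L Q s
    by (intro conjI exI[of _ "h ` Q"] exI[of _ "h s"] exI[of _ \<delta>'] exI[of _ "h ` (F \<inter> Q)"]) auto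
qed

lemma fa_recognizableE:
  assumes "fa_recognizable A L"
  obtains Q :: "nat set" and s \<delta> F where "finite A" "L \<subseteq> lists A" "finite Q" "s \<in> Q"
    "\<forall>st\<in>Q. \<forall>a\<in>A. \<delta> st a \<in> Q"
    "\<forall>w\<in>lists A. w \<in> L \<longleftrightarrow> fold (\<lambda>a st. \<delta> st a) w s \<in> F"
  using assms unfolding fa_recognizable_def by blast

lemma fold_step_closed:
  "w \<in> lists A \<Longrightarrow> st \<in> Q \<Longrightarrow> \<forall>st\<in>Q. \<forall>a\<in>A. \<delta> st a \<in> Q \<Longrightarrow> fold (\<lambda>a st. \<delta> st a) w st \<in> Q"
  by (induction w arbitrary: st) auto

lemma fa_recognizable_Int:
  assumes "fa_recognizable A L1" "fa_recognizable A L2"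
  shows "fa_recognizable A (L1 \<inter> L2)"
proof -
  obtain Q1 :: "nat set" and s1 \<delta>1 F1 where A: "finite A" and 1: "L1 \<subseteq> lists A" "finite Q1" "s1 \<in> Q1"
    "\<forall>st\<in>Q1. \<forall>a\<in>A. \<delta>1 st a \<in> Q1" "\<forall>w\<in>lists A. w \<in> L1 \<longleftrightarrow> fold (\<lambda>a st. \<delta>1 st a) w s1 \<in> F1"
    using assms(1) by (rule fa_recognizableE)
  obtain Q2 :: "nat set" and s2 \<delta>2 F2 where 2: "finite Q2" "s2 \<in> Q2"
    "\<forall>st\<in>Q2. \<forall>a\<in>A. \<delta>2 st a \<in> Q2" "\<forall>w\<in>lists A. w \<in> L2 \<longleftrightarrow> fold (\<lambda>a st. \<delta>2 st a) w s2 \<in> F2"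
    using assms(2) by (rule fa_recognizableE)
  define \<delta> where "\<delta> st a = (\<delta>1 (fst st) a, \<delta>2 (snd st) a)" for st a
  have "fold (\<lambda>a st. \<delta> st a) w st = (fold (\<lambda>a st. \<delta>1 st a) w (fst st), fold (\<lambda>a st. \<delta>2 st a) w (snd st))"
    for w st by (induction w arbitrary: st) (auto simp: \<delta>_def)
  then show ?thesis
    using A 1 2 by (intro fa_recognizable_dfa[where Q = "Q1 \<times> Q2" and s = "(s1, s2)"
        and \<delta> = \<delta> and F = "F1 \<times> F2"]) (auto simp: \<delta>_def)
qed

lemma fa_recognizable_map_preimage:
  assumes "fa_recognizable B L" "finite A" "\<forall>a\<in>A. f a \<in> B"
  shows "fa_recognizable A {w \<in> lists A. map f w \<in> L}"
proof -
  obtain Q :: "nat set" and s \<delta> F where "finite Q" "s \<in> Q" "\<forall>st\<in>Q. \<forall>a\<in>B. \<delta> st a \<in> Q"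
    "\<forall>w\<in>lists B. w \<in> L \<longleftrightarrow> fold (\<lambda>a st. \<delta> st a) w s \<in> F"
    using assms(1) by (rule fa_recognizableE)
  moreover have "fold (\<lambda>a st. \<delta> st (f a)) w st = fold (\<lambda>a st. \<delta> st a) (map f w) st" for w st
    by (induction w arbitrary: st) auto
  moreover have "w \<in> lists A \<Longrightarrow> map f w \<in> lists B" for w
    using assms(3) by auto
  ultimately show ?thesis
    using assms(2,3) by (intro fa_recognizable_dfa[where Q = Q and s = s
        and \<delta> = "\<lambda>st a. \<delta> st (f a)" and F = F]) auto
qed

lemma fa_recognizable_pumping:
  assumes "fa_recognizable A L" "infinite L"
  obtains x y z where "y \<noteq> []" "\<And>k. x @ concat (replicate k y) @ z \<in> L"
proof -
  obtain Q :: "nat set" and s \<delta> F where A: "finite A" "L \<subseteq> lists A" and D: "finite Q" "s \<in> Q"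
    "\<forall>st\<in>Q. \<forall>a\<in>A. \<delta> st a \<in> Q" "\<forall>w\<in>lists A. w \<in> L \<longleftrightarrow> fold (\<lambda>a st. \<delta> st a) w s \<in> F"
    using assms(1) by (rule fa_recognizableE)
  let ?run = "\<lambda>w. fold (\<lambda>a st. \<delta> st a) w s"
  obtain w where w: "w \<in> L" "card Q < length w"
  proof (rule ccontr)
    assume "\<not> thesis"
    then have "L \<subseteq> {xs. set xs \<subseteq> A \<and> length xs \<le> card Q}"
      using A(2) that by fastforce
    then show False
      using finite_lists_length_le[OF A(1)] assms(2) finite_subset by blast
  qed
  have wA: "w \<in> lists A" using w A by auto
  \<comment> \<open>pigeonhole: two of the card Q + 1 prefixes of w of length at most card Q reach the same state\<close>
  have "(\<lambda>i. ?run (take i w)) ` {0..card Q} \<subseteq> Q"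
    using wA by (auto intro!: fold_step_closed[OF _ D(2,3)] dest: in_set_takeD)
  then have "\<not> inj_on (\<lambda>i. ?run (take i w)) {0..card Q}"
    using card_mono[OF D(1)] card_image by (metis card_atLeastAtMost diff_zero not_less_eq_eq order_refl)
  then obtain i j where ij: "i < j" "j \<le> card Q" "?run (take i w) = ?run (take j w)"
    unfolding inj_on_def by (metis atLeastAtMost_iff linorder_neqE_nat)
  define x y z where "x = take i w" and "y = take (j - i) (drop i w)" and "z = drop j w"
  have xy: "take j w = x @ y"
    unfolding x_def y_def using ij by (metis le_add_diff_inverse less_imp_le_nat take_add)
  then have w_eq: "w = x @ y @ z"
    unfolding z_def by (metis append.assoc append_take_drop_id)
  have "fold (\<lambda>a st. \<delta> st a) y (?run x) = ?run x"
    using ij(3) xy by (simp add: x_def)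
  then have loop: "fold (\<lambda>a st. \<delta> st a) (concat (replicate k y)) (?run x) = ?run x" for k
    by (induction k) simp_all
  show thesis
  proof
    show "y \<noteq> []" using ij w(2) by (simp add: y_def)
    fix k
    have "?run (x @ concat (replicate k y) @ z) = ?run w"
      using loop[of k] loop[of 1] w_eq by simp
    moreover have "x @ concat (replicate k y) @ z \<in> lists A"
      using wA w_eq by auto
    ultimately show "x @ concat (replicate k y) @ z \<in> L"
      using D(4) w(1) wA by metis
  qed
qed

fun nfa_accepts :: "('s \<Rightarrow> 'a \<Rightarrow> 's set) \<Rightarrow> 's set \<Rightarrow> 'a list \<Rightarrow> 's \<Rightarrow> bool" where
  "nfa_accepts \<delta> F [] s \<longleftrightarrow> s \<in> F"
| "nfa_accepts \<delta> F (a # w) s \<longleftrightarrow> (\<exists>s'\<in>\<delta> s a. nfa_accepts \<delta> F w s')"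

lemma subset_run_iff_nfa_accepts:
  "fold (\<lambda>a S. \<Union>s\<in>S. \<delta> s a) w S \<inter> F \<noteq> {} \<longleftrightarrow> (\<exists>s\<in>S. nfa_accepts \<delta> F w s)"
  by (induction w arbitrary: S) auto

lemma fa_recognizable_nfa:
  fixes \<delta> :: "'s \<Rightarrow> 'a \<Rightarrow> 's set"
  assumes A: "finite A" and Q: "finite Q" and s: "s \<in> Q"
    and closed: "\<forall>st\<in>Q. \<forall>a\<in>A. \<delta> st a \<subseteq> Q"
  shows "fa_recognizable A {w \<in> lists A. nfa_accepts \<delta> F w s}"
    and "fa_recognizable A {w \<in> lists A. \<not> nfa_accepts \<delta> F w s}"
proof -
  have closed': "\<forall>S\<in>Pow Q. \<forall>a\<in>A. (\<Union>s\<in>S. \<delta> s a) \<in> Pow Q"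
    using closed by blast
  have run: "nfa_accepts \<delta> F w s \<longleftrightarrow> fold (\<lambda>a S. \<Union>s\<in>S. \<delta> s a) w {s} \<inter> F \<noteq> {}" for w
    using subset_run_iff_nfa_accepts[of \<delta> w "{s}" F] by simp
  show "fa_recognizable A {w \<in> lists A. nfa_accepts \<delta> F w s}"
    by (rule fa_recognizable_dfa[where Q = "Pow Q" and s = "{s}" and F = "{S. S \<inter> F \<noteq> {}}"])
      (use A Q s closed' in \<open>auto simp: run\<close>)
  show "fa_recognizable A {w \<in> lists A. \<not> nfa_accepts \<delta> F w s}"
    by (rule fa_recognizable_dfa[where Q = "Pow Q" and s = "{s}" and F = "{S. S \<inter> F = {}}"])
      (use A Q s closed' in \<open>auto simp: run\<close>)
qed

section \<open>Convolutions\<close>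

definition max_length :: "'a list list \<Rightarrow> nat" where
  "max_length ws = foldr (\<lambda>w m. max (length w) m) ws 0"

lemma max_length_Nil [simp]: "max_length [] = 0"
  and max_length_Cons [simp]: "max_length (w # ws) = max (length w) (max_length ws)"
  by (simp_all add: max_length_def)

lemma max_length_eq_0_iff: "max_length ws = 0 \<longleftrightarrow> (\<forall>w\<in>set ws. w = [])"
  by (induction ws) auto

lemma max_length_map_tl: "max_length (map tl ws) = max_length ws - 1"
  by (induction ws) auto

lemma convolution_max_length:
  "convolution ws = map (\<lambda>k. map (\<lambda>w. if k < length w then Some (w ! k) else None) ws) [0..<max_length ws]"
  unfolding convolution_def max_length_def ..

definition hd_opt :: "'a list \<Rightarrow> 'a option" where
  "hd_opt w = (if w = [] then None else Some (hd w))"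

lemma hd_opt_Nil [simp]: "hd_opt [] = None"
  and hd_opt_Cons [simp]: "hd_opt (a # w) = Some a"
  by (simp_all add: hd_opt_def)

lemma hd_opt_tl_eqI: "hd_opt u = hd_opt v \<Longrightarrow> tl u = tl v \<Longrightarrow> u = v"
  by (cases u; cases v) auto

lemma convolution_eq_Nil_iff: "convolution ws = [] \<longleftrightarrow> (\<forall>w\<in>set ws. w = [])"
  unfolding convolution_max_length using max_length_eq_0_iff by auto

lemma convolution_Cons:
  assumes "\<exists>w\<in>set ws. w \<noteq> []"
  shows "convolution ws = map hd_opt ws # convolution (map tl ws)"
proof -
  have "max_length ws = Suc (max_length (map tl ws))"
    using assms max_length_eq_0_iff[of ws] max_length_map_tl[of ws] by auto
  then have "[0..<max_length ws] = 0 # map Suc [0..<max_length (map tl ws)]"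
    by (simp add: upt_conv_Cons map_Suc_upt)
  moreover have "map (\<lambda>w. if 0 < length w then Some (w ! 0) else None) ws = map hd_opt ws"
    by (auto simp: hd_opt_def hd_conv_nth)
  moreover have "map (\<lambda>w. if Suc k < length w then Some (w ! Suc k) else None) ws =
      map (\<lambda>w. if k < length w then Some (w ! k) else None) (map tl ws)" for k
    by (auto simp: nth_tl)
  ultimately show ?thesis
    unfolding convolution_max_length by simp
qed

lemma convolution_in_lists:
  assumes "set ws \<subseteq> lists A"
  shows "convolution ws \<in> lists (conv_alphabet A (length ws))"
proof -
  have "map (\<lambda>w. if k < length w then Some (w ! k) else None) ws \<in> conv_alphabet A (length ws)" for k
    using assms by (auto simp: conv_alphabet_def dest: nth_mem)
  then show ?thesis
    unfolding convolution_max_length by auto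
qed

lemma finite_conv_alphabet: "finite A \<Longrightarrow> finite (conv_alphabet A m)"
  using finite_lists_length_eq[of "insert None (Some ` A)" m]
  unfolding conv_alphabet_def by (simp add: conj_commute)

lemma convolution_inj:
  "length ws = length vs \<Longrightarrow> convolution ws = convolution vs \<Longrightarrow> ws = vs"
proof (induction "max_length ws" arbitrary: ws vs rule: less_induct)
  case less
  show ?case
  proof (cases "\<forall>w\<in>set ws. w = []")
    case True
    then have "\<forall>v\<in>set vs. v = []"
      using less.prems(2) convolution_eq_Nil_iff by metis
    with True less.prems(1) show ?thesis
      by (metis list_eq_iff_nth_eq nth_mem)
  next
    case False
    then have "\<exists>v\<in>set vs. v \<noteq> []"
      using less.prems(2) convolution_eq_Nil_iff by metis
    then have "map hd_opt ws # convolution (map tl ws) = map hd_opt vs # convolution (map tl vs)"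
      using convolution_Cons False less.prems(2) by (metis (no_types))
    then have heads: "map hd_opt ws = map hd_opt vs"
      and tails: "convolution (map tl ws) = convolution (map tl vs)" by simp_all
    have "max_length (map tl ws) < max_length ws"
      using max_length_map_tl[of ws] max_length_eq_0_iff[of ws] False by auto
    then have "map tl ws = map tl vs"
      using less.hyps less.prems(1) tails by simp
    with heads less.prems(1) show ?thesis
      by (metis hd_opt_tl_eqI list_eq_iff_nth_eq nth_map)
  qed
qed

lemma convolution_replicate:
  assumes "0 < m"
  shows "convolution (replicate m w) = map (\<lambda>a. replicate m (Some a)) w"
proof -
  have "max_length (replicate m w) = (if m = 0 then 0 else length w)"
    by (induction m) auto
  then show ?thesis
    using assms unfolding convolution_max_length by (intro nth_equalityI) auto
qed

lemma fa_rel_recognizable_diagonal: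
  assumes rel: "fa_rel_recognizable A m R" and "finite A" "0 < m"
    and arity: "\<forall>ws\<in>R. length ws = m"
  shows "fa_recognizable A {w \<in> lists A. replicate m w \<in> R}"
proof -
  have "\<forall>a\<in>A. replicate m (Some a) \<in> conv_alphabet A m"
    by (auto simp: conv_alphabet_def)
  with rel \<open>finite A\<close> have "fa_recognizable A {w \<in> lists A. map (\<lambda>a. replicate m (Some a)) w \<in> convolution ` R}"
    unfolding fa_rel_recognizable_def by (rule fa_recognizable_map_preimage)
  moreover have "map (\<lambda>a. replicate m (Some a)) w \<in> convolution ` R \<longleftrightarrow> replicate m w \<in> R" for w
    using arity convolution_inj[of _ "replicate m w"]
    by (auto simp: convolution_replicate[OF \<open>0 < m\<close>, symmetric])
  ultimately show ?thesis by simp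
qed

fun opt_Cons :: "'a option \<Rightarrow> 'a list \<Rightarrow> 'a list" where
  "opt_Cons None u = u"
| "opt_Cons (Some a) u = a # u"

text \<open>A single track of a convolution is checked by running a DFA on it; the flag records that
  padding has been read, after which only padding may follow.\<close>
fun track_step :: "('s \<Rightarrow> 'a \<Rightarrow> 's) \<Rightarrow> 's \<times> bool \<Rightarrow> 'a option \<Rightarrow> ('s \<times> bool) set" where
  "track_step \<delta> (s, ended) (Some a) = (if ended then {} else {(\<delta> s a, False)})"
| "track_step \<delta> (s, ended) None = {(s, True)}"

definition track_accepts :: "'a set \<Rightarrow> ('s \<Rightarrow> 'a \<Rightarrow> 's) \<Rightarrow> 's set \<Rightarrow> 's \<times> bool \<Rightarrow> 'a list \<Rightarrow> bool" where
  "track_accepts A \<delta> F t u \<longleftrightarrow> u \<in> lists A \<and> (snd t \<longrightarrow> u = []) \<and> fold (\<lambda>a st. \<delta> st a) u (fst t) \<in> F"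

lemma track_accepts_Nil: "track_accepts A \<delta> F t [] \<longleftrightarrow> fst t \<in> F"
  by (simp add: track_accepts_def)

lemma track_accepts_step:
  assumes "track_accepts A \<delta> F t u"
  obtains t' where "t' \<in> track_step \<delta> t (hd_opt u)" "track_accepts A \<delta> F t' (tl u)"
  using assms by (cases t; cases u) (auto simp: track_accepts_def)

lemma track_accepts_opt_Cons:
  assumes "t' \<in> track_step \<delta> t x" "track_accepts A \<delta> F t' u" "x \<in> insert None (Some ` A)"
  shows "track_accepts A \<delta> F t (opt_Cons x u) \<and> hd_opt (opt_Cons x u) = x \<and> tl (opt_Cons x u) = u"
  using assms by (cases t; cases x) (auto simp: track_accepts_def split: if_splits)

definition tracks_step :: "('s \<Rightarrow> 'a \<Rightarrow> 's) \<Rightarrow> ('s \<times> bool) list \<Rightarrow> 'a option list \<Rightarrow> ('s \<times> bool) list set" where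
  "tracks_step \<delta> ts col = {ts'. length ts' = length ts \<and> length col = length ts \<and> (\<exists>x\<in>set col. x \<noteq> None)
     \<and> (\<forall>i<length ts. ts' ! i \<in> track_step \<delta> (ts ! i) (col ! i))}"

lemma tracks_step_extend:
  assumes ts': "ts' \<in> tracks_step \<delta> ts col" and col: "col \<in> conv_alphabet A (length ts)"
    and ws': "length ws' = length ts" "\<forall>i<length ts. track_accepts A \<delta> F (ts' ! i) (ws' ! i)"
  obtains ws where "length ws = length ts" "convolution ws = col # convolution ws'"
    "\<forall>i<length ts. track_accepts A \<delta> F (ts ! i) (ws ! i)"
proof -
  let ?m = "length ts"
  have col_len: "length col = ?m" and col_set: "set col \<subseteq> insert None (Some ` A)"
    using col by (simp_all add: conv_alphabet_def)
  define ws where "ws = map (\<lambda>i. opt_Cons (col ! i) (ws' ! i)) [0..<?m]"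
  have tracks: "track_accepts A \<delta> F (ts ! i) (ws ! i) \<and> hd_opt (ws ! i) = col ! i \<and> tl (ws ! i) = ws' ! i"
    if "i < ?m" for i
  proof -
    have "ts' ! i \<in> track_step \<delta> (ts ! i) (col ! i)"
      using that ts' by (simp add: tracks_step_def)
    moreover have "track_accepts A \<delta> F (ts' ! i) (ws' ! i)"
      using ws'(2) that by simp
    moreover have "col ! i \<in> insert None (Some ` A)"
      using that col_len by (intro subsetD[OF col_set nth_mem]) simp
    ultimately show ?thesis
      using that by (simp add: ws_def track_accepts_opt_Cons)
  qed
  have len: "length ws = ?m" by (simp add: ws_def)
  have heads: "map hd_opt ws = col"
    using tracks len col_len by (intro nth_equalityI) auto
  have tails: "map tl ws = ws'"
    using tracks len ws'(1) by (intro nth_equalityI) auto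
  obtain i where "i < ?m" "col ! i \<noteq> None"
    using ts' col_len by (auto simp: tracks_step_def in_set_conv_nth)
  then have "\<exists>w\<in>set ws. w \<noteq> []"
    using tracks len by (metis hd_opt_Nil nth_mem)
  then have "convolution ws = col # convolution ws'"
    using convolution_Cons heads tails by metis
  with that len tracks show thesis by blast
qed

lemma tracks_step_shrink:
  assumes ws: "length ws = length ts" "col # cw = convolution ws"
    "\<forall>i<length ts. track_accepts A \<delta> F (ts ! i) (ws ! i)"
  obtains ts' where "ts' \<in> tracks_step \<delta> ts col" "length ts' = length ts" "cw = convolution (map tl ws)"
    "\<forall>i<length ts. track_accepts A \<delta> F (ts' ! i) (map tl ws ! i)"
proof -
  let ?m = "length ts"
  have ne: "\<exists>w\<in>set ws. w \<noteq> []"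
    using ws(2) convolution_eq_Nil_iff by (metis list.distinct(1))
  then have col_eq: "col = map hd_opt ws" and cw_eq: "cw = convolution (map tl ws)"
    using ws(2) convolution_Cons by (metis list.inject)+
  have "\<forall>i<?m. \<exists>t'. t' \<in> track_step \<delta> (ts ! i) (hd_opt (ws ! i)) \<and> track_accepts A \<delta> F t' (tl (ws ! i))"
    using ws(3) track_accepts_step by metis
  then obtain f where f: "\<forall>i<?m. f i \<in> track_step \<delta> (ts ! i) (hd_opt (ws ! i))
      \<and> track_accepts A \<delta> F (f i) (tl (ws ! i))"
    by metis
  define ts' where "ts' = map f [0..<?m]"
  have "ts' \<in> tracks_step \<delta> ts col"
    using f ne ws(1) by (auto simp: tracks_step_def ts'_def col_eq in_set_conv_nth hd_opt_def)
  with that cw_eq f ws(1) show thesis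
    by (simp add: ts'_def)
qed

lemma nfa_accepts_tracks_step:
  assumes "cw \<in> lists (conv_alphabet A (length ts))"
  shows "nfa_accepts (tracks_step \<delta>) {ts. \<forall>t\<in>set ts. fst t \<in> F} cw ts \<longleftrightarrow>
    (\<exists>ws. length ws = length ts \<and> cw = convolution ws \<and> (\<forall>i<length ts. track_accepts A \<delta> F (ts ! i) (ws ! i)))"
  using assms
proof (induction cw arbitrary: ts rule: list.induct)
  case Nil
  have "[] = convolution ws \<longleftrightarrow> (\<forall>i<length ws. ws ! i = [])" for ws :: "'a list list"
    using convolution_eq_Nil_iff[of ws] by (auto simp: all_set_conv_all_nth)
  then show ?case
    by (auto simp: track_accepts_Nil all_set_conv_all_nth intro!: exI[of _ "replicate (length ts) []"])
next
  case (Cons col cw)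
  show ?case
  proof
    assume "nfa_accepts (tracks_step \<delta>) {ts. \<forall>t\<in>set ts. fst t \<in> F} (col # cw) ts"
    then obtain ts' where ts': "ts' \<in> tracks_step \<delta> ts col"
      and "nfa_accepts (tracks_step \<delta>) {ts. \<forall>t\<in>set ts. fst t \<in> F} cw ts'" by auto
    moreover have "length ts' = length ts" using ts' by (simp add: tracks_step_def)
    ultimately obtain ws' where ws': "length ws' = length ts" "cw = convolution ws'"
        "\<forall>i<length ts. track_accepts A \<delta> F (ts' ! i) (ws' ! i)"
      using Cons.IH[of ts'] Cons.prems by auto
    have "col \<in> conv_alphabet A (length ts)"
      using Cons.prems by simp
    then obtain ws where "length ws = length ts" "convolution ws = col # convolution ws'"
        "\<forall>i<length ts. track_accepts A \<delta> F (ts ! i) (ws ! i)"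
      by (rule tracks_step_extend[OF ts' _ ws'(1,3)])
    with ws'(2) show "\<exists>ws. length ws = length ts \<and> col # cw = convolution ws
        \<and> (\<forall>i<length ts. track_accepts A \<delta> F (ts ! i) (ws ! i))"
      by auto
  next
    assume "\<exists>ws. length ws = length ts \<and> col # cw = convolution ws
        \<and> (\<forall>i<length ts. track_accepts A \<delta> F (ts ! i) (ws ! i))"
    then obtain ws where ws: "length ws = length ts" "col # cw = convolution ws"
        "\<forall>i<length ts. track_accepts A \<delta> F (ts ! i) (ws ! i)"
      by blast
    then obtain ts' where ts': "ts' \<in> tracks_step \<delta> ts col" "length ts' = length ts"
        "cw = convolution (map tl ws)" "\<forall>i<length ts. track_accepts A \<delta> F (ts' ! i) (map tl ws ! i)"
      by (rule tracks_step_shrink)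
    then have "nfa_accepts (tracks_step \<delta>) {ts. \<forall>t\<in>set ts. fst t \<in> F} cw ts'"
      using Cons.IH[of ts'] Cons.prems ws(1) by (auto intro!: exI[of _ "map tl ws"])
    with ts'(1) show "nfa_accepts (tracks_step \<delta>) {ts. \<forall>t\<in>set ts. fst t \<in> F} (col # cw) ts"
      by auto
  qed
qed

lemma track_step_closed:
  assumes "fst t \<in> Q" "\<forall>s\<in>Q. \<forall>a\<in>A. \<delta> s a \<in> Q" "x \<in> insert None (Some ` A)" "t' \<in> track_step \<delta> t x"
  shows "fst t' \<in> Q"
  using assms by (cases t; cases x) (auto split: if_splits)

lemma tracks_step_closed:
  assumes closed: "\<forall>s\<in>Q. \<forall>a\<in>A. \<delta> s a \<in> Q"
    and ts: "ts \<in> {ts. set ts \<subseteq> Q \<times> UNIV \<and> length ts = m}" and col: "col \<in> conv_alphabet A m"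
    and ts': "ts' \<in> tracks_step \<delta> ts col"
  shows "ts' \<in> {ts. set ts \<subseteq> Q \<times> UNIV \<and> length ts = m}"
proof -
  have len: "length ts = m" "length col = m" "length ts' = m"
    using ts col ts' by (simp_all add: conv_alphabet_def tracks_step_def)
  have "fst (ts' ! i) \<in> Q" if "i < m" for i
  proof (rule track_step_closed[OF _ closed])
    show "fst (ts ! i) \<in> Q"
      using ts that len by (auto dest!: nth_mem)
    show "col ! i \<in> insert None (Some ` A)"
      using col that len unfolding conv_alphabet_def by (intro subsetD[OF _ nth_mem]) auto
    show "ts' ! i \<in> track_step \<delta> (ts ! i) (col ! i)"
      using ts' that len by (simp add: tracks_step_def)
  qed
  with len show ?thesis
    by (auto simp: in_set_conv_nth mem_Times_iff) (metis fst_conv)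
qed

lemma fa_rel_recognizable_lists:
  assumes "fa_recognizable A L"
  shows "fa_rel_recognizable A m {ws. length ws = m \<and> set ws \<subseteq> L}"
proof -
  obtain Q :: "nat set" and s \<delta> F where A: "finite A" "L \<subseteq> lists A" and D: "finite Q" "s \<in> Q"
    "\<forall>st\<in>Q. \<forall>a\<in>A. \<delta> st a \<in> Q" "\<forall>w\<in>lists A. w \<in> L \<longleftrightarrow> fold (\<lambda>a st. \<delta> st a) w s \<in> F"
    using assms by (rule fa_recognizableE)
  let ?CA = "conv_alphabet A m" and ?ts = "replicate m (s, False)"
  have start: "track_accepts A \<delta> F (s, False) w \<longleftrightarrow> w \<in> L" for w
    using A(2) D(4) by (auto simp: track_accepts_def)
  have "convolution ` {ws. length ws = m \<and> set ws \<subseteq> L}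
      = {cw \<in> lists ?CA. nfa_accepts (tracks_step \<delta>) {ts. \<forall>t\<in>set ts. fst t \<in> F} cw ?ts}"
  proof (intro set_eqI iffI)
    fix cw
    assume "cw \<in> convolution ` {ws. length ws = m \<and> set ws \<subseteq> L}"
    then obtain ws where ws: "cw = convolution ws" "length ws = m" "set ws \<subseteq> L" by blast
    then have "cw \<in> lists ?CA"
      using convolution_in_lists[of ws A] A(2) by auto
    with ws show "cw \<in> {cw \<in> lists ?CA. nfa_accepts (tracks_step \<delta>) {ts. \<forall>t\<in>set ts. fst t \<in> F} cw ?ts}"
      using nfa_accepts_tracks_step[of cw A ?ts \<delta> F] by (auto simp: start dest: nth_mem)
  next
    fix cw
    assume "cw \<in> {cw \<in> lists ?CA. nfa_accepts (tracks_step \<delta>) {ts. \<forall>t\<in>set ts. fst t \<in> F} cw ?ts}"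
    then obtain ws where "cw = convolution ws" "length ws = m" "\<forall>i<m. ws ! i \<in> L"
      using nfa_accepts_tracks_step[of cw A ?ts \<delta> F] by (auto simp: start)
    then show "cw \<in> convolution ` {ws. length ws = m \<and> set ws \<subseteq> L}"
      by (metis (mono_tags, lifting) image_eqI in_set_conv_nth mem_Collect_eq subsetI)
  qed
  moreover have "fa_recognizable ?CA {cw \<in> lists ?CA. nfa_accepts (tracks_step \<delta>) {ts. \<forall>t\<in>set ts. fst t \<in> F} cw ?ts}"
  proof (rule fa_recognizable_nfa)
    let ?Q = "{ts. set ts \<subseteq> Q \<times> (UNIV :: bool set) \<and> length ts = m}"
    show "finite ?Q"
      using D(1) by (intro finite_lists_length_eq finite_cartesian_product) simp_all
    show "?ts \<in> ?Q" using D(2) by auto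
    show "\<forall>ts\<in>?Q. \<forall>col\<in>?CA. tracks_step \<delta> ts col \<subseteq> ?Q"
      using tracks_step_closed[OF D(3)] by blast
  qed (use A(1) finite_conv_alphabet in auto)
  ultimately show ?thesis
    unfolding fa_rel_recognizable_def by simp
qed

section \<open>Values of strings\<close>

text \<open>The pair (h1, h2) stands for the class of h1 x + h2. Multiplication by x:
  x (h1 x + h2) = h1 x^2 + h2 x, which is equivalent to (h2 - p h1) x + q h1.\<close>
definition mul_x :: "int \<Rightarrow> int \<Rightarrow> int \<times> int \<Rightarrow> int \<times> int" where
  "mul_x p q h = (snd h - p * fst h, q * fst h)"

lemma mul_x_add: "mul_x p q (a + b) = mul_x p q a + mul_x p q b"
  and mul_x_diff: "mul_x p q (a - b) = mul_x p q a - mul_x p q b"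
  and mul_x_zero [simp]: "mul_x p q 0 = 0"
  by (simp_all add: mul_x_def zero_prod_def algebra_simps)

lemma mul_x_pow_diff: "(mul_x p q ^^ n) (a - b) = (mul_x p q ^^ n) a - (mul_x p q ^^ n) b"
  by (induction n) (simp_all add: mul_x_diff)

lemma mul_x_pow_scale:
  "(mul_x p q ^^ n) (g * a, g * b) = (g * fst ((mul_x p q ^^ n) (a, b)), g * snd ((mul_x p q ^^ n) (a, b)))"
  by (induction n) (simp_all add: mul_x_def algebra_simps)

fun str_val :: "int \<Rightarrow> int \<Rightarrow> int list \<Rightarrow> int \<times> int" where
  "str_val p q [] = 0"
| "str_val p q (a # w) = (0, a) + mul_x p q (str_val p q w)"

lemma str_val_append:
  "str_val p q (u @ w) = str_val p q u + (mul_x p q ^^ length u) (str_val p q w)"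
  by (induction u) (simp_all add: mul_x_add funpow_swap1)

lemma sim_Poly_str_val: "sim p q (Poly w) [:snd (str_val p q w), fst (str_val p q w):]"
proof (induction w)
  case Nil
  show ?case by (simp add: sim_def)
next
  case (Cons a w)
  obtain g where g: "Poly w = [:snd (str_val p q w), fst (str_val p q w):] + tpoly p q * g"
    using Cons.IH unfolding sim_def dvd_def by (metis add.commute diff_eq_eq)
  have "Poly (a # w) - [:snd (str_val p q (a # w)), fst (str_val p q (a # w)):]
      = tpoly p q * ([:fst (str_val p q w):] + pCons 0 g)"
    by (simp add: g tpoly_def mul_x_def algebra_simps mult_pCons_right smult_add_right)
  then show ?case
    unfolding sim_def by (metis dvd_triv_left)
qed

lemma sim_sym: "sim p q f g \<Longrightarrow> sim p q g f"
  unfolding sim_def by (metis dvd_minus_iff minus_diff_eq)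

lemma sim_trans: "sim p q f g \<Longrightarrow> sim p q g h \<Longrightarrow> sim p q f h"
  unfolding sim_def by (metis dvd_add diff_add_cancel add_diff_eq)

lemma sim_linear_iff: "sim p q [:a, b:] [:c, d:] \<longleftrightarrow> a = c \<and> b = d"
proof
  assume "sim p q [:a, b:] [:c, d:]"
  then obtain g where g: "[:a - c, b - d:] = tpoly p q * g"
    by (auto simp: sim_def dvd_def)
  have "g = 0"
  proof (rule ccontr)
    assume "g \<noteq> 0"
    moreover have "tpoly p q \<noteq> 0" "degree (tpoly p q) = 2"
      by (simp_all add: tpoly_def)
    ultimately have "degree (tpoly p q * g) = 2 + degree g"
      by (simp add: degree_mult_eq)
    then show False using g degree_pCons_le[of "a - c" "[:b - d:]"] by simp
  qed
  then show "a = c \<and> b = d" using g by simp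
qed (simp add: sim_def)

lemma psi_eq_str_val: "psi p q w = str_val p q w"
  unfolding psi_def
proof (rule the_equality)
  show "sim p q [:snd (str_val p q w), fst (str_val p q w):] (Poly w)"
    by (rule sim_sym[OF sim_Poly_str_val])
next
  fix h
  assume "sim p q [:snd h, fst h:] (Poly w)"
  from sim_trans[OF this sim_Poly_str_val] show "h = str_val p q w"
    by (simp add: sim_linear_iff prod_eq_iff)
qed

lemma str_equiv_iff: "str_equiv p q u w \<longleftrightarrow> str_val p q u = str_val p q w"
proof -
  have "str_equiv p q u w \<longleftrightarrow>
      sim p q [:snd (str_val p q u), fst (str_val p q u):] [:snd (str_val p q w), fst (str_val p q w):]"
    unfolding str_equiv_def using sim_Poly_str_val sim_sym sim_trans by meson
  then show ?thesis
    by (auto simp: sim_linear_iff prod_eq_iff)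
qed

section \<open>Shortlex-least representatives\<close>

lemma int_digit_split:
  fixes q h :: int
  assumes "q \<noteq> 0"
  obtains a k where "h = a + q * k" "\<bar>a\<bar> < \<bar>q\<bar>" "\<bar>q\<bar> * \<bar>k\<bar> \<le> \<bar>h\<bar>"
proof -
  define r k where "r = \<bar>h\<bar> mod \<bar>q\<bar>" and "k = \<bar>h\<bar> div \<bar>q\<bar>"
  have hrk: "\<bar>h\<bar> = r + \<bar>q\<bar> * k" and r: "0 \<le> r" "r < \<bar>q\<bar>" and k: "0 \<le> k"
    using assms by (simp_all add: r_def k_def pos_imp_zdiv_nonneg_iff)
  show thesis
  proof (rule that[of "sgn h * r" "sgn h * sgn q * k"])
    have "sgn h * r + q * (sgn h * sgn q * k) = sgn h * (r + \<bar>q\<bar> * k)"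
      by (simp add: algebra_simps abs_sgn)
    then show "h = sgn h * r + q * (sgn h * sgn q * k)"
      by (simp add: hrk[symmetric] sgn_mult_abs)
    show "\<bar>sgn h * r\<bar> < \<bar>q\<bar>" "\<bar>q\<bar> * \<bar>sgn h * sgn q * k\<bar> \<le> \<bar>h\<bar>"
      using r k hrk by (auto simp: abs_mult abs_sgn_eq)
  qed
qed

lemma str_val_surj:
  assumes pq: "1 + \<bar>p\<bar> < \<bar>q\<bar>"
  shows "\<exists>w\<in>lists (Sigma_q q). str_val p q w = h"
proof (induction h rule: measure_induct_rule[where f = "\<lambda>h. nat (3 * \<bar>fst h\<bar> + 2 * \<bar>snd h\<bar>)"])
  case (less h)
  obtain h1 h2 where h: "h = (h1, h2)" by force
  show ?case
  proof (cases "h = 0")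
    case True
    then show ?thesis by (intro bexI[of _ "[]"]) auto
  next
    case False
    have "q \<noteq> 0" using pq by auto
    then obtain a k where ak: "h2 = a + q * k" "\<bar>a\<bar> < \<bar>q\<bar>" "\<bar>q\<bar> * \<bar>k\<bar> \<le> \<bar>h2\<bar>"
      by (rule int_digit_split)
    have "3 * \<bar>k\<bar> + 2 * \<bar>h1 + p * k\<bar> < 3 * \<bar>h1\<bar> + 2 * \<bar>h2\<bar>"
    proof (cases "k = 0")
      case True
      then show ?thesis using False h by (auto simp: zero_prod_def)
    next
      case False
      have "(2 + \<bar>p\<bar>) * \<bar>k\<bar> \<le> \<bar>q\<bar> * \<bar>k\<bar>"
        using pq by (intro mult_right_mono) auto
      then have "2 * \<bar>k\<bar> + \<bar>p\<bar> * \<bar>k\<bar> \<le> \<bar>q\<bar> * \<bar>k\<bar>"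
        by (simp add: algebra_simps)
      moreover have "\<bar>h1 + p * k\<bar> \<le> \<bar>h1\<bar> + \<bar>p\<bar> * \<bar>k\<bar>"
        by (metis abs_mult abs_triangle_ineq)
      moreover have "1 \<le> \<bar>k\<bar>" using False by simp
      ultimately show ?thesis
        using ak(3) abs_ge_zero[of h1] by linarith
    qed
    moreover have "0 \<le> 3 * \<bar>k\<bar> + 2 * \<bar>h1 + p * k\<bar>" by simp
    ultimately have "nat (3 * \<bar>k\<bar> + 2 * \<bar>h1 + p * k\<bar>) < nat (3 * \<bar>fst h\<bar> + 2 * \<bar>snd h\<bar>)"
      unfolding h by (metis fst_conv snd_conv nat_less_eq_zless)
    then obtain w where w: "w \<in> lists (Sigma_q q)" "str_val p q w = (k, h1 + p * k)"
      using less[of "(k, h1 + p * k)"] by auto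
    have "a \<in> Sigma_q q" "str_val p q (a # w) = h"
      using ak w h by (auto simp: Sigma_q_def mul_x_def algebra_simps)
    with w show ?thesis by (intro bexI[of _ "a # w"]) auto
  qed
qed

lemma inj_on_str_val_Dom: "inj_on (str_val p q) (Dom p q)"
proof (rule inj_onI, rule ccontr)
  fix u w
  assume u: "u \<in> Dom p q" and w: "w \<in> Dom p q" and eq: "str_val p q u = str_val p q w" and "u \<noteq> w"
  have "total {(a :: int, b). a < b}"
    by (auto simp: total_on_def)
  then have "(u, w) \<in> lenlex {(a, b). a < b} \<or> (w, u) \<in> lenlex {(a, b). a < b}"
    using \<open>u \<noteq> w\<close> total_lenlex unfolding total_on_def by blast
  moreover have "str_equiv p q u w" "str_equiv p q w u"
    using eq by (simp_all add: str_equiv_iff)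
  ultimately show False
    using u w unfolding Dom_def llex_less_def by blast
qed

lemma lenlex_restrict:
  assumes "(u, w) \<in> lenlex r" "u \<in> lists A" "w \<in> lists A"
  shows "(u, w) \<in> lenlex (r \<inter> A \<times> A)"
proof -
  have "length u < length w \<or> length u = length w \<and> (u, w) \<in> lex r"
    using assms(1) unfolding lenlex_conv by auto
  then show ?thesis
  proof
    assume "length u = length w \<and> (u, w) \<in> lex r"
    then obtain xys x y xs ys where "u = xys @ x # xs" "w = xys @ y # ys" "(x, y) \<in> r"
      "length u = length w"
      unfolding lex_conv by auto
    with assms(2,3) show ?thesis
      unfolding lenlex_conv lex_conv by fastforce
  qed (simp add: lenlex_conv)
qed

lemma ex_Dom_str_val:
  assumes pq: "1 + \<bar>p\<bar> < \<bar>q\<bar>"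
  shows "\<exists>w\<in>Dom p q. str_val p q w = h"
proof -
  let ?r = "{(a :: int, b). a < b} \<inter> Sigma_q q \<times> Sigma_q q"
  let ?S = "{w \<in> lists (Sigma_q q). str_val p q w = h}"
  have "?r \<subseteq> measure (\<lambda>a. nat (a + \<bar>q\<bar>))"
    by (auto simp: Sigma_q_def)
  then have wf: "wf (lenlex ?r)"
    by (intro wf_lenlex) (rule wf_subset[OF wf_measure])
  obtain w0 where "w0 \<in> ?S"
    using str_val_surj[OF pq] by blast
  then obtain m where m: "m \<in> ?S" and min: "\<And>u. (u, m) \<in> lenlex ?r \<Longrightarrow> u \<notin> ?S"
    using wfE_min[OF wf, of w0 ?S] by blast
  have "\<not> (\<exists>u\<in>lists (Sigma_q q). llex_less u m \<and> str_equiv p q u m)"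
  proof
    assume "\<exists>u\<in>lists (Sigma_q q). llex_less u m \<and> str_equiv p q u m"
    then obtain u where u: "u \<in> lists (Sigma_q q)" "(u, m) \<in> lenlex {(a, b). a < b}" "str_equiv p q u m"
      unfolding llex_less_def by blast
    then have "(u, m) \<in> lenlex ?r"
      using lenlex_restrict m by blast
    then show False
      using min m u by (auto simp: str_equiv_iff)
  qed
  with m show ?thesis
    unfolding Dom_def by blast
qed

lemma bij_betw_psi_Dom:
  assumes "1 + \<bar>p\<bar> < \<bar>q\<bar>"
  shows "bij_betw (psi p q) (Dom p q) UNIV"
  unfolding bij_betw_def psi_eq_str_val[abs_def]
proof
  show "str_val p q ` Dom p q = UNIV"
    using ex_Dom_str_val[OF assms] by (metis UNIV_eq_I image_iff)
qed (rule inj_on_str_val_Dom)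

section \<open>Carries\<close>

text \<open>When two strings are compared digit by digit, c is the class not yet cancelled. If a digit
  difference d is read, the remaining digits must cancel x^-1 (c + d), which is only possible if q
  divides c2 + d; the new carry is then determined.\<close>
definition carry :: "int \<Rightarrow> int \<Rightarrow> int \<times> int \<Rightarrow> int \<Rightarrow> (int \<times> int) option" where
  "carry p q c d =
     (if q dvd snd c + d then Some ((snd c + d) div q, fst c + p * ((snd c + d) div q)) else None)"

lemma carry_iff:
  assumes "q \<noteq> 0"
  shows "c + mul_x p q v + (0, d) = 0 \<longleftrightarrow> (\<exists>c'. carry p q c d = Some c' \<and> c' + v = 0)"
proof -
  have "c + mul_x p q v + (0, d) = 0 \<longleftrightarrow> snd c + d = q * (- fst v) \<and> snd v = - (fst c + p * (- fst v))"
    by (auto simp: mul_x_def prod_eq_iff algebra_simps)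
  also have "\<dots> \<longleftrightarrow> (\<exists>k. snd c + d = q * k \<and> v = - (k, fst c + p * k))"
    by (auto simp: prod_eq_iff intro!: exI[of _ "- fst v"])
  also have "\<dots> \<longleftrightarrow> (\<exists>c'. carry p q c d = Some c' \<and> c' + v = 0)"
    using assms by (auto simp: carry_def prod_eq_iff eq_neg_iff_add_eq_0 add.commute)
  finally show ?thesis .
qed

fun digit :: "int option \<Rightarrow> int" where
  "digit None = 0"
| "digit (Some a) = a"

lemma str_val_hd_tl: "str_val p q u = (0, digit (hd_opt u)) + mul_x p q (str_val p q (tl u))"
  by (cases u) (simp_all add: mul_x_def zero_prod_def)

lemma str_val_add_carry_iff:
  assumes "q \<noteq> 0"
  shows "c + str_val p q u + str_val p q v = str_val p q w \<longleftrightarrow>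
    (\<exists>c'. carry p q c (digit (hd_opt u) + digit (hd_opt v) - digit (hd_opt w)) = Some c'
       \<and> c' + str_val p q (tl u) + str_val p q (tl v) = str_val p q (tl w))"
proof -
  let ?V = "str_val p q (tl u) + str_val p q (tl v) - str_val p q (tl w)"
  let ?d = "digit (hd_opt u) + digit (hd_opt v) - digit (hd_opt w)"
  have "c + str_val p q u + str_val p q v - str_val p q w = c + mul_x p q ?V + (0, ?d)"
    by (subst (1 2 3) str_val_hd_tl) (simp add: mul_x_add mul_x_diff algebra_simps)
  then have "c + str_val p q u + str_val p q v = str_val p q w \<longleftrightarrow> c + mul_x p q ?V + (0, ?d) = 0"
    by (metis right_minus_eq)
  also have "\<dots> \<longleftrightarrow> (\<exists>c'. carry p q c ?d = Some c' \<and> c' + ?V = 0)"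
    by (rule carry_iff[OF assms])
  also have "\<dots> \<longleftrightarrow> (\<exists>c'. carry p q c ?d = Some c'
      \<and> c' + str_val p q (tl u) + str_val p q (tl v) = str_val p q (tl w))"
    by (simp add: add.assoc add_diff_eq)
  finally show ?thesis .
qed

definition carry_box :: "int \<Rightarrow> int \<Rightarrow> int \<Rightarrow> (int \<times> int) set" where
  "carry_box p q E = {c. \<bar>q\<bar> * \<bar>fst c\<bar> \<le> (2 + \<bar>p\<bar>) * E \<and> \<bar>snd c\<bar> \<le> (1 + \<bar>p\<bar>) * E}"

lemma finite_carry_box:
  assumes "q \<noteq> 0"
  shows "finite (carry_box p q E)"
proof (rule finite_subset)
  show "carry_box p q E \<subseteq> {-((2 + \<bar>p\<bar>) * E)..(2 + \<bar>p\<bar>) * E} \<times> {-((1 + \<bar>p\<bar>) * E)..(1 + \<bar>p\<bar>) * E}"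
  proof (clarsimp simp: carry_box_def)
    fix a b :: int
    assume "\<bar>q\<bar> * \<bar>a\<bar> \<le> (2 + \<bar>p\<bar>) * E" "\<bar>b\<bar> \<le> (1 + \<bar>p\<bar>) * E"
    moreover have "1 * \<bar>a\<bar> \<le> \<bar>q\<bar> * \<bar>a\<bar>"
      using assms by (intro mult_right_mono) auto
    ultimately show "- ((2 + \<bar>p\<bar>) * E) \<le> a \<and> a \<le> (2 + \<bar>p\<bar>) * E \<and> - ((1 + \<bar>p\<bar>) * E) \<le> b \<and> b \<le> (1 + \<bar>p\<bar>) * E"
      by linarith
  qed
qed simp

lemma zero_mem_carry_box: "0 \<le> E \<Longrightarrow> 0 \<in> carry_box p q E"
  by (simp add: carry_box_def)

text \<open>The carries stay bounded: |q k| \<le> |c2| + |d| bounds the new first component, and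
  2 + |p| \<le> |q| absorbs the growth of the second.\<close>
lemma carry_mem_carry_box:
  assumes pq: "1 + \<bar>p\<bar> < \<bar>q\<bar>" and d: "\<bar>d\<bar> \<le> E" and c: "c \<in> carry_box p q E"
    and c': "carry p q c d = Some c'"
  shows "c' \<in> carry_box p q E"
proof -
  obtain k where k: "snd c + d = q * k" and c'_eq: "c' = (k, fst c + p * k)"
    using c' pq by (auto simp: carry_def split: if_splits)
  have c1: "\<bar>q\<bar> * \<bar>fst c\<bar> \<le> (2 + \<bar>p\<bar>) * E" and c2: "\<bar>snd c\<bar> \<le> (1 + \<bar>p\<bar>) * E"
    using c by (simp_all add: carry_box_def)
  have qk: "\<bar>q\<bar> * \<bar>k\<bar> \<le> (2 + \<bar>p\<bar>) * E"
  proof -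
    have "\<bar>q\<bar> * \<bar>k\<bar> = \<bar>snd c + d\<bar>" by (simp add: k abs_mult)
    also have "\<dots> \<le> (2 + \<bar>p\<bar>) * E" using c2 d by (simp add: algebra_simps)
    finally show ?thesis .
  qed
  have "\<bar>q\<bar> * \<bar>fst c + p * k\<bar> \<le> \<bar>q\<bar> * \<bar>fst c\<bar> + \<bar>p\<bar> * (\<bar>q\<bar> * \<bar>k\<bar>)"
    by (metis abs_mult abs_triangle_ineq distrib_left mult.left_commute mult_left_mono abs_ge_zero)
  also have "\<dots> \<le> (2 + \<bar>p\<bar>) * E + \<bar>p\<bar> * ((2 + \<bar>p\<bar>) * E)"
    using c1 qk by (simp add: mult_left_mono add_mono)
  also have "\<dots> = (2 + \<bar>p\<bar>) * ((1 + \<bar>p\<bar>) * E)"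
    by (simp add: algebra_simps)
  also have "\<dots> \<le> \<bar>q\<bar> * ((1 + \<bar>p\<bar>) * E)"
    using pq d by (intro mult_right_mono) auto
  finally have "\<bar>fst c + p * k\<bar> \<le> (1 + \<bar>p\<bar>) * E"
    using pq by (subst (asm) mult_le_cancel_left_pos) auto
  with qk show ?thesis
    by (simp add: carry_box_def c'_eq)
qed

lemma str_val_carry_iff:
  assumes "q \<noteq> 0"
  shows "c + str_val p q u = str_val p q (a # w) \<longleftrightarrow>
    (\<exists>c'. carry p q c (digit (hd_opt u) - a) = Some c' \<and> c' + str_val p q (tl u) = str_val p q w)"
  using str_val_add_carry_iff[OF assms, where c = c and u = u and v = "[]" and w = "a # w"] by simp

section \<open>Regularity of the domain\<close>

datatype lex_mode = Tied | Below | Above | Ended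

fun next_mode :: "lex_mode \<Rightarrow> int \<Rightarrow> int \<Rightarrow> lex_mode" where
  "next_mode Tied b a = (if b < a then Below else if a < b then Above else Tied)"
| "next_mode m b a = m"

text \<open>While reading w, the automaton for the complement of Dom guesses a string u letter by
  letter. The mode records how the letters of u guessed so far compare with those of w read so
  far (Ended: u is exhausted), and mode_holds m u w says that the remaining suffixes u, w
  complete this to u being shortlex-smaller than w.\<close>
fun mode_holds :: "lex_mode \<Rightarrow> int list \<Rightarrow> int list \<Rightarrow> bool" where
  "mode_holds Tied u w \<longleftrightarrow> llex_less u w"
| "mode_holds Below u w \<longleftrightarrow> True"
| "mode_holds Above u w \<longleftrightarrow> length u < length w"
| "mode_holds Ended u w \<longleftrightarrow> u = []"

lemma mode_holds_Nil_Cons: "mode_holds m [] (a # w)"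
  by (cases m) (auto simp: llex_less_def)

lemma mode_holds_Nil_Nil: "mode_holds m [] [] \<longleftrightarrow> m = Below \<or> m = Ended"
  by (cases m) (auto simp: llex_less_def)

lemma mode_holds_Cons:
  assumes "length u \<le> length w"
  shows "mode_holds m (b # u) (a # w) \<longleftrightarrow> m \<noteq> Ended \<and> mode_holds (next_mode m b a) u w"
proof (cases m)
  case Tied
  have "(u, w) \<in> lex {(a, b). a < b} \<Longrightarrow> length u = length w"
    by (simp add: lex_conv)
  with Tied assms show ?thesis
    by (auto simp: llex_less_def lenlex_conv)
qed auto

definition dom_step :: "int \<Rightarrow> int \<Rightarrow> (int \<times> int) \<times> lex_mode \<Rightarrow> int \<Rightarrow> ((int \<times> int) \<times> lex_mode) set" where
  "dom_step p q s a =
     {(c', next_mode (snd s) b a) | b c'. b \<in> Sigma_q q \<and> snd s \<noteq> Ended \<and> carry p q (fst s) (b - a) = Some c'}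
     \<union> {(c', Ended) | c'. carry p q (fst s) (- a) = Some c'}"

abbreviation dom_final :: "((int \<times> int) \<times> lex_mode) set" where
  "dom_final \<equiv> {(0, Below), (0, Ended)}"

lemma nfa_accepts_dom_stepD:
  assumes q: "q \<noteq> 0" and "nfa_accepts (dom_step p q) dom_final w (c, m)"
  shows "\<exists>u\<in>lists (Sigma_q q). length u \<le> length w \<and> mode_holds m u w \<and> c + str_val p q u = str_val p q w"
  using assms(2)
proof (induction w arbitrary: c m)
  case Nil
  then show ?case
    by (auto simp: mode_holds_Nil_Nil)
next
  case (Cons a w)
  then obtain s' where s': "s' \<in> dom_step p q (c, m) a" and acc: "nfa_accepts (dom_step p q) dom_final w s'"
    by auto
  from s' consider
      (letter) b c' where "s' = (c', next_mode m b a)" "b \<in> Sigma_q q" "m \<noteq> Ended"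
        "carry p q c (b - a) = Some c'"
    | (ended) c' where "s' = (c', Ended)" "carry p q c (- a) = Some c'"
    unfolding dom_step_def by auto
  then show ?case
  proof cases
    case letter
    with acc Cons.IH[of c' "next_mode m b a"] obtain u where u: "u \<in> lists (Sigma_q q)" "length u \<le> length w"
        "mode_holds (next_mode m b a) u w" "c' + str_val p q u = str_val p q w" by auto
    then have "mode_holds m (b # u) (a # w)" "c + str_val p q (b # u) = str_val p q (a # w)"
      using letter mode_holds_Cons str_val_carry_iff[OF q, where p = p and c = c and u = "b # u" and a = a and w = w]
      by auto
    with u letter show ?thesis by (intro bexI[of _ "b # u"]) auto
  next
    case ended
    with acc Cons.IH[of c' Ended] have "c' + str_val p q [] = str_val p q w" by auto
    then have "c + str_val p q [] = str_val p q (a # w)"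
      using ended str_val_carry_iff[OF q, where p = p and c = c and u = "[]" and a = a and w = w] by auto
    then show ?thesis
      using mode_holds_Nil_Cons by (intro bexI[of _ "[]"]) auto
  qed
qed

lemma nfa_accepts_dom_stepI:
  assumes q: "q \<noteq> 0" and "u \<in> lists (Sigma_q q)" "length u \<le> length w" "mode_holds m u w"
    "c + str_val p q u = str_val p q w"
  shows "nfa_accepts (dom_step p q) dom_final w (c, m)"
  using assms(2-)
proof (induction w arbitrary: u c m)
  case Nil
  then show ?case
    by (auto simp: mode_holds_Nil_Nil)
next
  case (Cons a w)
  then obtain c' where c': "carry p q c (digit (hd_opt u) - a) = Some c'"
      "c' + str_val p q (tl u) = str_val p q w"
    using str_val_carry_iff[OF q, where p = p and c = c and u = u and a = a and w = w] by blast
  show ?case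
  proof (cases u)
    case Nil
    with c' Cons.IH[of "[]" Ended c'] have "nfa_accepts (dom_step p q) dom_final w (c', Ended)" by auto
    moreover have "(c', Ended) \<in> dom_step p q (c, m) a"
      using c' Nil by (auto simp: dom_step_def)
    ultimately show ?thesis by auto
  next
    case (Cons b u')
    with Cons.prems mode_holds_Cons have "m \<noteq> Ended" "mode_holds (next_mode m b a) u' w" by auto
    with c' Cons.IH[of u' "next_mode m b a" c'] Cons.prems Cons have "nfa_accepts (dom_step p q) dom_final w (c', next_mode m b a)"
      by auto
    moreover have "(c', next_mode m b a) \<in> dom_step p q (c, m) a"
      using c' Cons Cons.prems \<open>m \<noteq> Ended\<close> unfolding dom_step_def
      by (intro UnI1 CollectI exI[of _ b] exI[of _ c']) auto
    ultimately show ?thesis by auto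
  qed
qed

lemma Dom_eq_nfa_rejects:
  assumes "q \<noteq> 0"
  shows "Dom p q = {w \<in> lists (Sigma_q q). \<not> nfa_accepts (dom_step p q) dom_final w (0, Tied)}"
proof -
  have "length u \<le> length w" if "llex_less u w" for u w :: "int list"
    using that by (auto simp: llex_less_def lenlex_conv lex_conv)
  then have "nfa_accepts (dom_step p q) dom_final w (0, Tied) \<longleftrightarrow>
      (\<exists>u\<in>lists (Sigma_q q). llex_less u w \<and> str_equiv p q u w)" for w
    using nfa_accepts_dom_stepD[OF assms, of p w 0 Tied] nfa_accepts_dom_stepI[OF assms, of _ w Tied 0 p]
    by (auto simp: str_equiv_iff)
  then show ?thesis
    unfolding Dom_def by blast
qed

lemma UNIV_lex_mode: "(UNIV :: lex_mode set) = {Tied, Below, Above, Ended}"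
  using lex_mode.exhaust by auto

lemma fa_recognizable_Dom:
  assumes pq: "1 + \<bar>p\<bar> < \<bar>q\<bar>"
  shows "fa_recognizable (Sigma_q q) (Dom p q)"
proof -
  have q: "q \<noteq> 0" using pq by auto
  let ?Q = "carry_box p q (2 * \<bar>q\<bar>) \<times> (UNIV :: lex_mode set)"
  have "\<forall>s\<in>?Q. \<forall>a\<in>Sigma_q q. dom_step p q s a \<subseteq> ?Q"
  proof (intro ballI subsetI)
    fix s a s'
    assume s: "s \<in> ?Q" and a: "a \<in> Sigma_q q" and s': "s' \<in> dom_step p q s a"
    then obtain d where "carry p q (fst s) d = Some (fst s')" "\<bar>d\<bar> \<le> 2 * \<bar>q\<bar>"
      unfolding dom_step_def Sigma_q_def by force
    with s show "s' \<in> ?Q"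
      using carry_mem_carry_box[OF pq] by (auto simp: mem_Times_iff)
  qed
  moreover have "finite ?Q"
    using finite_carry_box[OF q] by (simp add: UNIV_lex_mode)
  moreover have "(0, Tied) \<in> ?Q"
    by (simp add: zero_mem_carry_box)
  moreover have "finite (Sigma_q q)"
    by (simp add: Sigma_q_def)
  ultimately show ?thesis
    unfolding Dom_eq_nfa_rejects[OF q] by (intro fa_recognizable_nfa(2))
qed

section \<open>Addition\<close>

definition add_step :: "int \<Rightarrow> int \<Rightarrow> int \<times> int \<Rightarrow> int option list \<Rightarrow> (int \<times> int) set" where
  "add_step p q c col = set_option (carry p q c (digit (col ! 0) + digit (col ! 1) - digit (col ! 2)))"

lemma nfa_accepts_add_step_convolution:
  assumes q: "q \<noteq> 0"
  shows "nfa_accepts (add_step p q) {0} (convolution [u, v, w]) c \<longleftrightarrow>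
    c + str_val p q u + str_val p q v = str_val p q w"
proof (induction "length u + length v + length w" arbitrary: u v w c rule: less_induct)
  case less
  show ?case
  proof (cases "u = [] \<and> v = [] \<and> w = []")
    case True
    then show ?thesis
      using convolution_eq_Nil_iff[of "[u, v, w]"] by simp
  next
    case False
    then have conv: "convolution [u, v, w] = [hd_opt u, hd_opt v, hd_opt w] # convolution [tl u, tl v, tl w]"
      using convolution_Cons[of "[u, v, w]"] by auto
    have "length (tl u) + length (tl v) + length (tl w) < length u + length v + length w"
      using False by (cases u; cases v; cases w) auto
    then have "nfa_accepts (add_step p q) {0} (convolution [tl u, tl v, tl w]) c' \<longleftrightarrow>
        c' + str_val p q (tl u) + str_val p q (tl v) = str_val p q (tl w)" for c'
      by (rule less.hyps)
    then show ?thesis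
      using str_val_add_carry_iff[OF q, where p = p and c = c and u = u and v = v and w = w]
      unfolding conv by (auto simp: add_step_def)
  qed
qed

lemma digit_bound: "x \<in> insert None (Some ` Sigma_q q) \<Longrightarrow> \<bar>digit x\<bar> \<le> \<bar>q\<bar>"
  by (auto simp: Sigma_q_def)

lemma fa_recognizable_add_step:
  assumes pq: "1 + \<bar>p\<bar> < \<bar>q\<bar>"
  shows "fa_recognizable (conv_alphabet (Sigma_q q) 3)
    {cw \<in> lists (conv_alphabet (Sigma_q q) 3). nfa_accepts (add_step p q) {0} cw 0}"
proof (rule fa_recognizable_nfa)
  have q: "q \<noteq> 0" using pq by auto
  let ?Q = "carry_box p q (3 * \<bar>q\<bar>)"
  show "\<forall>c\<in>?Q. \<forall>col\<in>conv_alphabet (Sigma_q q) 3. add_step p q c col \<subseteq> ?Q"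
  proof (intro ballI subsetI)
    fix c col c'
    assume c: "c \<in> ?Q" and col: "col \<in> conv_alphabet (Sigma_q q) 3" and c': "c' \<in> add_step p q c col"
    have digits: "\<bar>digit (col ! i)\<bar> \<le> \<bar>q\<bar>" if "i < 3" for i
    proof (rule digit_bound)
      have "col ! i \<in> set col" using col that by (simp add: conv_alphabet_def)
      then show "col ! i \<in> insert None (Some ` Sigma_q q)" using col by (auto simp: conv_alphabet_def)
    qed
    have "\<bar>digit (col ! 0) + digit (col ! 1) - digit (col ! 2)\<bar> \<le> 3 * \<bar>q\<bar>"
      using digits[of 0] digits[of 1] digits[of 2] unfolding abs_le_iff by linarith
    with c c' show "c' \<in> ?Q"
      using carry_mem_carry_box[OF pq] by (auto simp: add_step_def)
  qed
  show "finite ?Q" using finite_carry_box[OF q] .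
  show "0 \<in> ?Q" by (simp add: zero_mem_carry_box)
  show "finite (conv_alphabet (Sigma_q q) 3)"
    by (simp add: finite_conv_alphabet Sigma_q_def)
qed

lemma addZ2_eq_plus: "addZ2 a b = a + b"
  by (simp add: addZ2_def prod_eq_iff)

lemma fa_rel_recognizable_add:
  assumes pq: "1 + \<bar>p\<bar> < \<bar>q\<bar>"
  shows "fa_rel_recognizable (Sigma_q q) 3
    {[u, v, w] | u v w. u \<in> Dom p q \<and> v \<in> Dom p q \<and> w \<in> Dom p q \<and>
      addZ2 (psi p q u) (psi p q v) = psi p q w}"
proof -
  have q: "q \<noteq> 0" using pq by auto
  let ?CA = "conv_alphabet (Sigma_q q) 3"
  let ?R = "{[u, v, w] | u v w. u \<in> Dom p q \<and> v \<in> Dom p q \<and> w \<in> Dom p q \<and>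
      addZ2 (psi p q u) (psi p q v) = psi p q w}"
  have len3: "length ws = 3 \<longleftrightarrow> (\<exists>u v w. ws = [u, v, w])" for ws :: "int list list"
    by (auto simp: numeral_3_eq_3 length_Suc_conv)
  have "convolution ` ?R = {cw \<in> lists ?CA. nfa_accepts (add_step p q) {0} cw 0}
      \<inter> convolution ` {ws. length ws = 3 \<and> set ws \<subseteq> Dom p q}"
  proof (intro set_eqI iffI)
    fix cw
    assume "cw \<in> convolution ` ?R"
    then obtain u v w where cw: "cw = convolution [u, v, w]" and uvw: "u \<in> Dom p q" "v \<in> Dom p q" "w \<in> Dom p q"
      and sum: "addZ2 (psi p q u) (psi p q v) = psi p q w" by blast
    have "convolution [u, v, w] \<in> lists (conv_alphabet (Sigma_q q) (length [u, v, w]))"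
      by (rule convolution_in_lists) (use uvw in \<open>auto simp: Dom_def\<close>)
    then have "cw \<in> lists ?CA"
      by (simp add: cw numeral_3_eq_3)
    moreover have "nfa_accepts (add_step p q) {0} cw 0"
      using sum by (simp add: cw nfa_accepts_add_step_convolution[OF q] psi_eq_str_val addZ2_eq_plus)
    ultimately show "cw \<in> {cw \<in> lists ?CA. nfa_accepts (add_step p q) {0} cw 0}
        \<inter> convolution ` {ws. length ws = 3 \<and> set ws \<subseteq> Dom p q}"
      using cw uvw by auto
  next
    fix cw
    assume "cw \<in> {cw \<in> lists ?CA. nfa_accepts (add_step p q) {0} cw 0}
        \<inter> convolution ` {ws. length ws = 3 \<and> set ws \<subseteq> Dom p q}"
    then obtain u v w where "cw = convolution [u, v, w]" "u \<in> Dom p q" "v \<in> Dom p q" "w \<in> Dom p q"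
      "nfa_accepts (add_step p q) {0} cw 0"
      unfolding len3 by auto
    then show "cw \<in> convolution ` ?R"
      by (auto simp: nfa_accepts_add_step_convolution[OF q] psi_eq_str_val addZ2_eq_plus)
  qed
  moreover have "fa_rel_recognizable (Sigma_q q) 3 {ws. length ws = 3 \<and> set ws \<subseteq> Dom p q}"
    by (rule fa_rel_recognizable_lists[OF fa_recognizable_Dom[OF pq]])
  ultimately show ?thesis
    using fa_recognizable_Int[OF fa_recognizable_add_step[OF pq]]
    unfolding fa_rel_recognizable_def by simp
qed

section \<open>Non-regular preimages of cyclic subgroups\<close>

definition x_pow :: "int \<Rightarrow> int \<Rightarrow> nat \<Rightarrow> int \<times> int" where
  "x_pow p q n = (mul_x p q ^^ n) (0, 1)"

lemma x_pow_coprime: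
  assumes "coprime p q" "1 \<le> n"
  shows "coprime (fst (x_pow p q n)) q \<and> q dvd snd (x_pow p q n)"
  using assms(2)
proof (induction n rule: dec_induct)
  case base
  then show ?case by (simp add: x_pow_def mul_x_def)
next
  case (step n)
  then obtain k where k: "snd (x_pow p q n) = q * k" and cop: "coprime (fst (x_pow p q n)) q"
    by blast
  have "coprime (p * fst (x_pow p q n)) q"
    using cop assms(1) by simp
  moreover have "gcd q (k * q + - (p * fst (x_pow p q n))) = gcd q (- (p * fst (x_pow p q n)))"
    by (rule gcd_add_mult)
  ultimately have "coprime (k * q - p * fst (x_pow p q n)) q"
    by (simp add: coprime_iff_gcd_eq_1 gcd.commute)
  then show ?case
    by (simp add: x_pow_def mul_x_def k[unfolded x_pow_def] algebra_simps)
qed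

lemma fst_x_pow_nonzero:
  assumes "coprime p q" "1 < \<bar>q\<bar>" "1 \<le> n"
  shows "fst (x_pow p q n) \<noteq> 0"
  using x_pow_coprime[OF assms(1,3)] assms(2) by auto

lemma funpow_commute: "(f ^^ m) ((f ^^ n) x) = (f ^^ n) ((f ^^ m) x)"
  by (metis add.commute comp_apply funpow_add)

lemma Dom_pumping:
  assumes "fa_recognizable A L" "infinite L" "L \<subseteq> Dom p q"
  obtains u0 u1 u2 l where "u0 \<in> L" "u1 \<in> L" "u2 \<in> L" "1 \<le> l"
    "str_val p q u1 \<noteq> str_val p q u0"
    "(mul_x p q ^^ l) (str_val p q u1 - str_val p q u0) = str_val p q u2 - str_val p q u1"
proof -
  obtain x y z where y: "y \<noteq> []" and pumped: "\<And>k. x @ concat (replicate k y) @ z \<in> L"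
    using fa_recognizable_pumping[OF assms(1,2)] by metis
  have L: "x @ z \<in> L" "x @ y @ z \<in> L" "x @ y @ y @ z \<in> L"
    using pumped[of 0] pumped[of 1] pumped[of 2] by (simp_all add: numeral_2_eq_2)
  let ?M = "mul_x p q" and ?sv = "str_val p q"
  have diff: "?sv (s @ r) - ?sv (s @ r') = (?M ^^ length s) (?sv r - ?sv r')" for s r r'
    by (simp add: str_val_append mul_x_pow_diff)
  have "?sv (x @ y @ z) - ?sv (x @ z) = (?M ^^ length x) (?sv (y @ z) - ?sv z)"
    by (rule diff)
  moreover have "?sv (x @ y @ y @ z) - ?sv (x @ y @ z) = (?M ^^ length y) ((?M ^^ length x) (?sv (y @ z) - ?sv z))"
  proof -
    have "?sv (x @ y @ y @ z) - ?sv (x @ y @ z) = (?M ^^ length x) ((?M ^^ length y) (?sv (y @ z) - ?sv z))"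
      using diff[of x "y @ y @ z" "y @ z"] diff[of y "y @ z" z] by simp
    then show ?thesis by (simp only: funpow_commute)
  qed
  moreover have "?sv (x @ y @ z) \<noteq> ?sv (x @ z)"
    using inj_on_str_val_Dom[of p q] L(1,2) assms(3) y by (auto dest: inj_onD)
  moreover have "1 \<le> length y" using y by (cases y) auto
  ultimately show thesis
    using that L by metis
qed

lemma not_fa_recognizable_preimage:
  assumes pq: "1 + \<bar>p\<bar> < \<bar>q\<bar>" and inf: "infinite S" and diff: "\<And>a b. a \<in> S \<Longrightarrow> b \<in> S \<Longrightarrow> a - b \<in> S"
    and escape: "\<And>l g. 1 \<le> l \<Longrightarrow> g \<in> S \<Longrightarrow> g \<noteq> 0 \<Longrightarrow> (mul_x p q ^^ l) g \<notin> S"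
  shows "\<not> fa_recognizable A {w \<in> Dom p q. psi p q w \<in> S}"
proof
  let ?L = "{w \<in> Dom p q. psi p q w \<in> S}"
  assume reg: "fa_recognizable A ?L"
  have "S \<subseteq> psi p q ` ?L"
  proof
    fix h
    assume "h \<in> S"
    moreover obtain w where "w \<in> Dom p q" "psi p q w = h"
      using bij_betw_psi_Dom[OF pq] by (metis bij_betw_def UNIV_I imageE)
    ultimately show "h \<in> psi p q ` ?L" by blast
  qed
  with inf have infinite: "infinite ?L"
    using finite_surj by blast
  have subset: "?L \<subseteq> Dom p q" by blast
  obtain u0 u1 u2 l where u: "u0 \<in> ?L" "u1 \<in> ?L" "u2 \<in> ?L" "1 \<le> l"
    "str_val p q u1 \<noteq> str_val p q u0"
    "(mul_x p q ^^ l) (str_val p q u1 - str_val p q u0) = str_val p q u2 - str_val p q u1"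
    by (rule Dom_pumping[OF reg infinite subset])
  have "str_val p q u \<in> S" if "u \<in> ?L" for u
    using that by (simp add: psi_eq_str_val)
  then have "str_val p q u1 - str_val p q u0 \<in> S" "str_val p q u2 - str_val p q u1 \<in> S"
    using u(1-3) diff by blast+
  moreover have "str_val p q u1 - str_val p q u0 \<noteq> 0"
    using u(5) by simp
  ultimately show False
    using escape[OF u(4)] u(6) by metis
qed

lemma cyc_xi_iff: "h \<in> cyc xi \<longleftrightarrow> fst h = 0"
  by (cases h) (auto simp: cyc_def xi_def)

lemma cyc_eta_iff: "h \<in> cyc eta \<longleftrightarrow> snd h = 0"
  by (cases h) (auto simp: cyc_def eta_def)

lemma infinite_cyc:
  assumes "g \<noteq> 0"
  shows "infinite (cyc g)"
proof -
  have "inj (\<lambda>n. (n * fst g, n * snd g))"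
    using assms by (auto intro!: injI simp: prod_eq_iff zero_prod_def)
  then show ?thesis
    unfolding cyc_def by (simp add: full_SetCompr_eq infinite_UNIV_char_0 finite_image_iff)
qed

lemma not_fa_recognizable_preimage_cyc_xi:
  assumes "1 + \<bar>p\<bar> < \<bar>q\<bar>" "coprime p q"
  shows "\<not> fa_recognizable A {w \<in> Dom p q. psi p q w \<in> cyc xi}"
proof (rule not_fa_recognizable_preimage[OF assms(1) infinite_cyc])
  fix l :: nat and g
  assume "1 \<le> l" "g \<in> cyc xi" "g \<noteq> 0"
  then obtain n where g: "g = (n * 0, n * 1)" and "n \<noteq> 0"
    by (cases g) (auto simp: cyc_xi_iff zero_prod_def)
  have "(mul_x p q ^^ l) g = (n * fst (x_pow p q l), n * snd (x_pow p q l))"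
    unfolding g x_pow_def by (rule mul_x_pow_scale)
  then have "fst ((mul_x p q ^^ l) g) = n * fst (x_pow p q l)"
    by simp
  then show "(mul_x p q ^^ l) g \<notin> cyc xi"
    using fst_x_pow_nonzero[OF assms(2) _ \<open>1 \<le> l\<close>] assms(1) \<open>n \<noteq> 0\<close> by (auto simp: cyc_xi_iff)
next
  show "xi \<noteq> 0" by (simp add: xi_def zero_prod_def)
next
  show "a - b \<in> cyc xi" if "a \<in> cyc xi" "b \<in> cyc xi" for a b
    using that by (simp add: cyc_xi_iff)
qed

lemma not_fa_recognizable_preimage_cyc_eta:
  assumes "1 + \<bar>p\<bar> < \<bar>q\<bar>" "coprime p q"
  shows "\<not> fa_recognizable A {w \<in> Dom p q. psi p q w \<in> cyc eta}"
proof (rule not_fa_recognizable_preimage[OF assms(1) infinite_cyc])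
  fix l :: nat and g
  assume "1 \<le> l" "g \<in> cyc eta" "g \<noteq> 0"
  then obtain n where g: "g = mul_x p q (n * 0, n * 1)" and "n \<noteq> 0"
    by (cases g) (auto simp: cyc_eta_iff zero_prod_def mul_x_def)
  have "(mul_x p q ^^ l) g = (mul_x p q ^^ Suc l) (n * 0, n * 1)"
    unfolding g by (simp only: funpow_Suc_right comp_apply)
  also have "\<dots> = (n * fst (x_pow p q (Suc l)), n * snd (x_pow p q (Suc l)))"
    unfolding x_pow_def by (rule mul_x_pow_scale)
  finally have "snd ((mul_x p q ^^ l) g) = n * (q * fst (x_pow p q l))"
    by (simp add: x_pow_def mul_x_def)
  then show "(mul_x p q ^^ l) g \<notin> cyc eta"
    using fst_x_pow_nonzero[OF assms(2) _ \<open>1 \<le> l\<close>] assms(1) \<open>n \<noteq> 0\<close> by (auto simp: cyc_eta_iff)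
next
  show "eta \<noteq> 0" by (simp add: eta_def zero_prod_def)
next
  show "a - b \<in> cyc eta" if "a \<in> cyc eta" "b \<in> cyc eta" for a b
    using that by (simp add: cyc_eta_iff)
qed

lemma not_fa_rel_recognizable_graph:
  assumes "\<not> fa_recognizable (Sigma_q q) {w \<in> Dom p q. psi p q w \<in> S}"
    and "\<And>h. \<pi> h = h \<longleftrightarrow> h \<in> S"
  shows "\<not> fa_rel_recognizable (Sigma_q q) 2
    {[u, v] | u v. u \<in> Dom p q \<and> v \<in> Dom p q \<and> psi p q v = \<pi> (psi p q u)}"
proof
  let ?R = "{[u, v] | u v. u \<in> Dom p q \<and> v \<in> Dom p q \<and> psi p q v = \<pi> (psi p q u)}"
  assume "fa_rel_recognizable (Sigma_q q) 2 ?R"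
  then have "fa_recognizable (Sigma_q q) {w \<in> lists (Sigma_q q). replicate 2 w \<in> ?R}"
    by (rule fa_rel_recognizable_diagonal) (auto simp: Sigma_q_def)
  moreover have "replicate 2 w \<in> ?R \<longleftrightarrow> w \<in> Dom p q \<and> psi p q w \<in> S" for w
    using assms(2)[of "psi p q w"] by (auto simp: numeral_2_eq_2)
  then have "{w \<in> lists (Sigma_q q). replicate 2 w \<in> ?R} = {w \<in> Dom p q. psi p q w \<in> S}"
    by (auto simp: Dom_def)
  ultimately show False
    using assms(1) by simp
qed

theorem theorem1:
  fixes p q :: int
  assumes "1 + \<bar>p\<bar> < \<bar>q\<bar>"
  shows "fa_recognizable (Sigma_q q) (Dom p q)
    \<and> bij_betw (psi p q) (Dom p q) UNIV
    \<and> fa_rel_recognizable (Sigma_q q) 3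
        {[u, v, w] | u v w. u \<in> Dom p q \<and> v \<in> Dom p q \<and> w \<in> Dom p q \<and>
                             addZ2 (psi p q u) (psi p q v) = psi p q w}
    \<and> (gcd p q = 1 \<longrightarrow>
         \<not> fa_recognizable (Sigma_q q) {w \<in> Dom p q. psi p q w \<in> cyc xi}
       \<and> \<not> fa_recognizable (Sigma_q q) {w \<in> Dom p q. psi p q w \<in> cyc eta}
       \<and> \<not> fa_rel_recognizable (Sigma_q q) 2
            {[u, v] | u v. u \<in> Dom p q \<and> v \<in> Dom p q \<and> psi p q v = pi_xi (psi p q u)}
       \<and> \<not> fa_rel_recognizable (Sigma_q q) 2
            {[u, v] | u v. u \<in> Dom p q \<and> v \<in> Dom p q \<and> psi p q v = pi_eta (psi p q u)})"
proof (intro conjI impI)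
  assume "gcd p q = 1"
  then have cop: "coprime p q"
    by (simp add: coprime_iff_gcd_eq_1)
  note xi = not_fa_recognizable_preimage_cyc_xi[OF assms cop]
  note eta = not_fa_recognizable_preimage_cyc_eta[OF assms cop]
  show "\<not> fa_recognizable (Sigma_q q) {w \<in> Dom p q. psi p q w \<in> cyc xi}"
    by (rule xi)
  show "\<not> fa_recognizable (Sigma_q q) {w \<in> Dom p q. psi p q w \<in> cyc eta}"
    by (rule eta)
  show "\<not> fa_rel_recognizable (Sigma_q q) 2
      {[u, v] | u v. u \<in> Dom p q \<and> v \<in> Dom p q \<and> psi p q v = pi_xi (psi p q u)}"
    by (rule not_fa_rel_recognizable_graph[OF xi]) (auto simp: pi_xi_def cyc_xi_iff prod_eq_iff)
  show "\<not> fa_rel_recognizable (Sigma_q q) 2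
      {[u, v] | u v. u \<in> Dom p q \<and> v \<in> Dom p q \<and> psi p q v = pi_eta (psi p q u)}"
    by (rule not_fa_rel_recognizable_graph[OF eta]) (auto simp: pi_eta_def cyc_eta_iff prod_eq_iff)
qed (rule fa_recognizable_Dom[OF assms] bij_betw_psi_Dom[OF assms] fa_rel_recognizable_add[OF assms])+

end
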